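(* Let $P\subset\mathbb R^n$ be a bounded open convex set and $\mu$ Lebesgue measure. Then there exists a convex function $\phi\in L^1(P)$ with $\int_P\phi\,d\mu=0$ and $\inf_P\phi=-1$ (in particular $\phi\not\equiv 0$) such that $$-\frac{2}{n+1}\left(\frac{n}{n+1}\right)^n\inf_P\phi=\frac{1}{\mu(P)}\int_P|\phi|\,d\mu .$$
   Context: For every convex $\phi\in L^1(P)$ with $\int_P\phi\,d\mu=0$ one has $-\frac{2}{n+1}\left(\frac{n}{n+1}\right)^n\inf_P\phi\le\frac{1}{\mu(P)}\int_P|\phi|\,d\mu\le -2\inf_P\phi$; the claim asserts that the first of these inequalities is attained by a nonzero function. *)

theory Defs
  imports "HOL-Analysis.Analysis"
begin

end

theory Submission
  imports Defs
begin

text \<open>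
  Fix \<open>x\<^sub>0 \<in> P\<close> and let \<open>g\<close> be the Minkowski gauge of \<open>P\<close> centred at \<open>x\<^sub>0\<close>. For \<open>s > 0\<close> the
  sublevel set \<open>{g < s}\<close> is the homothetic copy \<open>x\<^sub>0 + s (P - x\<^sub>0)\<close>; hence \<open>P = {g < 1}\<close>, \<open>g\<close> is
  convex, and \<open>g\<close> pushes the normalised Lebesgue measure on \<open>P\<close> forward to the density
  \<open>n s\<^sup>n\<^sup>-\<^sup>1\<close> on \<open>[0, 1]\<close>, so integrals over \<open>P\<close> of functions of \<open>g\<close> become one-dimensional.
  The extremal function is \<open>\<phi> = (n + 1)/n \<cdot> g - 1\<close>: it is convex, attains its infimum \<open>-1\<close> at \<open>x\<^sub>0\<close>,
  has mean \<open>0\<close>, and since it changes sign at level \<open>s\<^sub>0 = n/(n + 1)\<close>, its mean absolute value is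
  \<open>2 s\<^sub>0\<^sup>n (1 - s\<^sub>0) = 2/(n + 1) (n/(n + 1))\<^sup>n\<close>.
\<close>

definition minkowski_gauge :: "'a::real_normed_vector set \<Rightarrow> 'a \<Rightarrow> 'a \<Rightarrow> real" where
  "minkowski_gauge P x0 x = Inf {t. 0 < t \<and> x0 + (1/t) *\<^sub>R (x - x0) \<in> P}"

lemma open_imp_absorbing:
  fixes x0 :: "'a::real_normed_vector"
  assumes "open P" "x0 \<in> P"
  obtains t where "0 < t" "x0 + (1/t) *\<^sub>R (x - x0) \<in> P"
proof -
  have "((\<lambda>t::real. 1/t) \<longlongrightarrow> 0) at_top"
    by (rule tendsto_divide_0[OF tendsto_const filterlim_at_top_imp_at_infinity[OF filterlim_ident]])
  then have "((\<lambda>t. x0 + (1/t) *\<^sub>R (x - x0)) \<longlongrightarrow> x0 + 0 *\<^sub>R (x - x0)) at_top"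
    by (intro tendsto_add tendsto_scaleR tendsto_const)
  then have "\<forall>\<^sub>F t in at_top. x0 + (1/t) *\<^sub>R (x - x0) \<in> P"
    using assms by (simp add: topological_tendstoD)
  moreover have "\<forall>\<^sub>F t in at_top. (0::real) < t"
    by (rule eventually_gt_at_top)
  ultimately have "\<forall>\<^sub>F t in at_top. 0 < t \<and> x0 + (1/t) *\<^sub>R (x - x0) \<in> P"
    by (rule eventually_conj[rotated])
  then obtain N where "\<And>t. N \<le> t \<Longrightarrow> 0 < t \<and> x0 + (1/t) *\<^sub>R (x - x0) \<in> P"
    unfolding eventually_at_top_linorder by blast
  then show ?thesis
    using that by blast
qed

lemma convex_radial_mem_mono:
  fixes x0 :: "'a::real_vector"
  assumes "convex P" "x0 \<in> P" "0 < t" "t \<le> t'" "x0 + (1/t) *\<^sub>R (x - x0) \<in> P"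
  shows "x0 + (1/t') *\<^sub>R (x - x0) \<in> P"
proof -
  define u where "u = t / t'"
  have u: "0 \<le> u" "u \<le> 1"
    using assms(3,4) by (auto simp: u_def divide_le_eq)
  have "(1 - u) *\<^sub>R x0 + u *\<^sub>R (x0 + (1/t) *\<^sub>R (x - x0)) \<in> P"
    using convexD[OF assms(1,2,5)] u by simp
  moreover have "(1 - u) *\<^sub>R x0 + u *\<^sub>R (x0 + (1/t) *\<^sub>R (x - x0)) = x0 + (1/t') *\<^sub>R (x - x0)"
    using assms(3,4) by (simp add: u_def algebra_simps)
  ultimately show ?thesis
    by simp
qed

lemma open_radial_mem_smaller:
  fixes x0 :: "'a::real_normed_vector"
  assumes "open P" "0 < t" "x0 + (1/t) *\<^sub>R (x - x0) \<in> P"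
  obtains t' where "0 < t'" "t' < t" "x0 + (1/t') *\<^sub>R (x - x0) \<in> P"
proof -
  let ?f = "\<lambda>s. x0 + (1/s) *\<^sub>R (x - x0)"
  have "isCont ?f t"
    using assms(2) by (intro continuous_intros) auto
  then have "(?f \<longlongrightarrow> ?f t) (at_left t)"
    by (simp add: isCont_def filterlim_at_split)
  then have "\<forall>\<^sub>F s in at_left t. ?f s \<in> P"
    using assms(1,3) by (simp add: topological_tendstoD)
  moreover have "\<forall>\<^sub>F s in at_left t. s \<in> {0<..<t}"
    using assms(2) by (rule eventually_at_left_real)
  ultimately have "\<forall>\<^sub>F s in at_left t. s \<in> {0<..<t} \<and> ?f s \<in> P"
    by (rule eventually_conj[rotated])
  then obtain s where "s \<in> {0<..<t}" "?f s \<in> P"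
    using eventually_happens'[OF trivial_limit_at_left_real] by blast
  then show ?thesis
    using that by auto
qed

lemma minkowski_gauge_less_iff:
  assumes "open P" "convex P" "x0 \<in> P" "0 < t"
  shows "minkowski_gauge P x0 x < t \<longleftrightarrow> x0 + (1/t) *\<^sub>R (x - x0) \<in> P"
proof -
  let ?S = "{t. 0 < t \<and> x0 + (1/t) *\<^sub>R (x - x0) \<in> P}"
  have "?S \<noteq> {}"
    using open_imp_absorbing[OF assms(1,3)] by blast
  moreover have "bdd_below ?S"
    by (rule bdd_belowI[of _ 0]) auto
  ultimately have "Inf ?S < t \<longleftrightarrow> (\<exists>s\<in>?S. s < t)"
    by (simp add: cInf_less_iff)
  also have "\<dots> \<longleftrightarrow> x0 + (1/t) *\<^sub>R (x - x0) \<in> P"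
  proof
    assume "\<exists>s\<in>?S. s < t"
    then show "x0 + (1/t) *\<^sub>R (x - x0) \<in> P"
      using convex_radial_mem_mono[OF assms(2,3)] by (auto intro: less_imp_le)
  next
    assume "x0 + (1/t) *\<^sub>R (x - x0) \<in> P"
    then show "\<exists>s\<in>?S. s < t"
      using open_radial_mem_smaller[OF assms(1,4)] by (metis (mono_tags, lifting) mem_Collect_eq)
  qed
  finally show ?thesis
    unfolding minkowski_gauge_def .
qed

lemma minkowski_gauge_less_one_iff:
  assumes "open P" "convex P" "x0 \<in> P"
  shows "minkowski_gauge P x0 x < 1 \<longleftrightarrow> x \<in> P"
  using minkowski_gauge_less_iff[OF assms zero_less_one] by simp

lemma minkowski_gauge_nonneg:
  assumes "open P" "x0 \<in> P"
  shows "0 \<le> minkowski_gauge P x0 x"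
  unfolding minkowski_gauge_def using open_imp_absorbing[OF assms, of x]
  by (intro cInf_greatest) auto

lemma minkowski_gauge_self:
  assumes "open P" "convex P" "x0 \<in> P"
  shows "minkowski_gauge P x0 x0 = 0"
proof -
  have "minkowski_gauge P x0 x0 < t" if "0 < t" for t
    using minkowski_gauge_less_iff[OF assms that] assms(3) by simp
  then have "minkowski_gauge P x0 x0 \<le> 0"
    by (metis less_irrefl not_le)
  then show ?thesis
    using minkowski_gauge_nonneg[OF assms(1,3), of x0] by simp
qed

lemma convex_radial_mem_combination:
  fixes x0 :: "'a::real_vector"
  assumes "convex P" "0 < s" "0 < t" "0 < u" "u < 1"
    and "x0 + (1/s) *\<^sub>R (x - x0) \<in> P" "x0 + (1/t) *\<^sub>R (y - x0) \<in> P"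
  shows "x0 + (1 / ((1 - u) * s + u * t)) *\<^sub>R (((1 - u) *\<^sub>R x + u *\<^sub>R y) - x0) \<in> P"
proof -
  define T where "T = (1 - u) * s + u * t"
  have "0 < T"
    using assms(2-5) by (simp add: T_def add_pos_pos)
  define a where "a = (1 - u) * s / T"
  define b where "b = u * t / T"
  have "a + b = ((1 - u) * s + u * t) / T"
    by (simp add: a_def b_def add_divide_distrib)
  then have ab: "0 \<le> a" "0 \<le> b" "a + b = 1"
    using assms(2-5) \<open>0 < T\<close> by (auto simp: a_def b_def T_def)
  have "a *\<^sub>R (x0 + (1/s) *\<^sub>R (x - x0)) + b *\<^sub>R (x0 + (1/t) *\<^sub>R (y - x0))
        = (a + b) *\<^sub>R x0 + (a / s) *\<^sub>R (x - x0) + (b / t) *\<^sub>R (y - x0)"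
    by (simp add: algebra_simps)
  also have "\<dots> = x0 + ((1 - u) / T) *\<^sub>R (x - x0) + (u / T) *\<^sub>R (y - x0)"
    using ab assms(2,3) by (simp add: a_def b_def)
  also have "\<dots> = x0 + (1/T) *\<^sub>R ((1 - u) *\<^sub>R (x - x0) + u *\<^sub>R (y - x0))"
    by (simp only: scaleR_add_right scaleR_scaleR) (simp add: add.assoc)
  also have "(1 - u) *\<^sub>R (x - x0) + u *\<^sub>R (y - x0) = ((1 - u) *\<^sub>R x + u *\<^sub>R y) - x0"
    by (simp add: algebra_simps)
  finally show ?thesis
    using convexD[OF assms(1,6,7) ab] by (simp add: T_def)
qed

lemma convex_on_minkowski_gauge:
  assumes "open P" "convex P" "x0 \<in> P"
  shows "convex_on UNIV (minkowski_gauge P x0)"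
proof (rule convex_onI)
  fix x y :: 'a and u :: real
  assume u: "0 < u" "u < 1"
  let ?g = "minkowski_gauge P x0"
  show "?g ((1 - u) *\<^sub>R x + u *\<^sub>R y) \<le> (1 - u) * ?g x + u * ?g y"
  proof (rule field_le_epsilon)
    fix e :: real
    assume "0 < e"
    define s where "s = ?g x + e"
    define t where "t = ?g y + e"
    have "0 < s" "0 < t"
      using \<open>0 < e\<close> minkowski_gauge_nonneg[OF assms(1,3)]
      by (simp_all add: s_def t_def add_nonneg_pos)
    moreover have "x0 + (1/s) *\<^sub>R (x - x0) \<in> P" "x0 + (1/t) *\<^sub>R (y - x0) \<in> P"
      using minkowski_gauge_less_iff[OF assms \<open>0 < s\<close>, of x]
        minkowski_gauge_less_iff[OF assms \<open>0 < t\<close>, of y] \<open>0 < e\<close>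
      by (simp_all add: s_def t_def)
    ultimately have "x0 + (1 / ((1 - u) * s + u * t)) *\<^sub>R (((1 - u) *\<^sub>R x + u *\<^sub>R y) - x0) \<in> P"
      using convex_radial_mem_combination[OF assms(2) _ _ u] by blast
    moreover have "0 < (1 - u) * s + u * t"
      using u \<open>0 < s\<close> \<open>0 < t\<close> by (simp add: add_pos_pos)
    ultimately have "?g ((1 - u) *\<^sub>R x + u *\<^sub>R y) < (1 - u) * s + u * t"
      using minkowski_gauge_less_iff[OF assms] by blast
    then show "?g ((1 - u) *\<^sub>R x + u *\<^sub>R y) \<le> (1 - u) * ?g x + u * ?g y + e"
      by (simp add: s_def t_def algebra_simps)
  qed
qed simp

lemma continuous_on_minkowski_gauge:
  fixes P :: "'a::euclidean_space set"
  assumes "open P" "convex P" "x0 \<in> P"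
  shows "continuous_on UNIV (minkowski_gauge P x0)"
  using convex_on_continuous[OF open_UNIV convex_on_minkowski_gauge[OF assms]] .

lemma minkowski_gauge_sublevel_eq_image:
  assumes "open P" "convex P" "x0 \<in> P" "0 < s"
  shows "{x. minkowski_gauge P x0 x < s} = (\<lambda>y. s *\<^sub>R y + (1 - s) *\<^sub>R x0) ` P"
proof -
  have "x0 + (1/s) *\<^sub>R ((s *\<^sub>R y + (1 - s) *\<^sub>R x0) - x0) = y" for y
    using assms(4) by (simp add: algebra_simps)
  moreover have "x = s *\<^sub>R (x0 + (1/s) *\<^sub>R (x - x0)) + (1 - s) *\<^sub>R x0" for x
    using assms(4) by (simp add: algebra_simps)
  ultimately show ?thesis
    using minkowski_gauge_less_iff[OF assms] by (auto simp: image_iff)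
qed

lemma emeasure_minkowski_gauge_sublevel:
  fixes P :: "'a::euclidean_space set"
  assumes "open P" "convex P" "x0 \<in> P" "0 < s"
  shows "emeasure lebesgue {x. minkowski_gauge P x0 x < s} = ennreal (s ^ DIM('a)) * emeasure lebesgue P"
  using assms(4) by (simp add: minkowski_gauge_sublevel_eq_image[OF assms] emeasure_lebesgue_affine)

lemma convex_on_affine_minkowski_gauge:
  assumes "open P" "convex P" "x0 \<in> P" "0 \<le> a"
  shows "convex_on P (\<lambda>x. a * minkowski_gauge P x0 x - c)"
proof -
  have "convex_on P (\<lambda>x. a * minkowski_gauge P x0 x + - c)"
    using convex_on_subset[OF convex_on_minkowski_gauge[OF assms(1-3)] subset_UNIV] assms(2,4)
    by (intro convex_on_add convex_on_cmul) (auto simp: convex_on_const)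
  then show ?thesis
    by simp
qed

lemma INF_affine_minkowski_gauge:
  assumes "open P" "convex P" "x0 \<in> P" "0 \<le> a"
  shows "(INF x\<in>P. a * minkowski_gauge P x0 x - c) = - c"
proof (rule cInf_eq_minimum)
  show "- c \<in> (\<lambda>x. a * minkowski_gauge P x0 x - c) ` P"
    using assms(3) by (rule rev_image_eqI) (simp add: minkowski_gauge_self[OF assms(1-3)])
  show "- c \<le> y" if "y \<in> (\<lambda>x. a * minkowski_gauge P x0 x - c) ` P" for y
    using that minkowski_gauge_nonneg[OF assms(1,3)] assms(4) by auto
qed

lemma borel_measurable_minkowski_gauge:
  fixes P :: "'a::euclidean_space set"
  assumes "open P" "convex P" "x0 \<in> P"
  shows "minkowski_gauge P x0 \<in> borel_measurable lebesgue"
  using continuous_on_minkowski_gauge[OF assms]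
  by (metis borel_measurable_continuous_onI measurable_completion measurable_lborel2)

lemma emeasure_minkowski_gauge_less:
  fixes P :: "'a::euclidean_space set"
  assumes "open P" "convex P" "bounded P" "x0 \<in> P"
  shows "emeasure lebesgue (P \<inter> {x. minkowski_gauge P x0 x < t})
         = ennreal (measure lebesgue P * max 0 (min t 1) ^ DIM('a))"
proof (cases "0 < t")
  case False
  have "\<not> minkowski_gauge P x0 x < t" for x
    using False minkowski_gauge_nonneg[OF assms(1,4), of x] by linarith
  then show ?thesis
    using False by (simp add: max_def min_def zero_power)
next
  case True
  have "P \<in> lmeasurable"
    using assms(1,3) by (simp add: bounded_set_imp_lmeasurable)
  moreover have "P \<inter> {x. minkowski_gauge P x0 x < t} = {x. minkowski_gauge P x0 x < min t 1}"
    using minkowski_gauge_less_one_iff[OF assms(1,2,4)] by auto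
  ultimately show ?thesis
    using emeasure_minkowski_gauge_sublevel[OF assms(1,2,4), of "min t 1"] True
    by (simp add: emeasure_eq_measure2 ennreal_mult mult.commute)
qed

lemma measure_eqI_Iio:
  fixes M N :: "real measure"
  assumes sets: "sets M = sets borel" "sets N = sets borel"
    and fin: "\<And>x. emeasure M {..<x} < \<infinity>"
    and eq: "\<And>x. emeasure M {..<x} = emeasure N {..<x}"
  shows "M = N"
proof (rule measure_eqI_generator_eq_countable)
  let ?E = "range (lessThan :: real \<Rightarrow> real set)"
  have "{..<a} \<inter> {..<b} = {..<min a b}" for a b :: real
    by auto
  then show "Int_stable ?E"
    by (auto simp: Int_stable_def)
  show "?E \<subseteq> Pow UNIV" "sets M = sigma_sets UNIV ?E" "sets N = sigma_sets UNIV ?E"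
    unfolding sets borel_Iio by auto
  show "lessThan ` \<rat> \<subseteq> ?E"
    by auto
  have "\<exists>q\<in>\<rat>. x < q" for x :: real
    using Rats_dense_in_real[of x "x + 1"] by auto
  then show "(\<Union>q\<in>\<rat>. {..<q :: real}) = UNIV"
    by auto
  show "\<And>a. a \<in> lessThan ` \<rat> \<Longrightarrow> emeasure M a \<noteq> \<infinity>"
    using fin by (auto simp: less_top)
qed (auto intro: eq countable_rat)

lemma emeasure_density_power_lessThan:
  fixes c :: real
  assumes "0 \<le> c" "1 \<le> n"
  shows "emeasure (density lborel (\<lambda>s. ennreal (c * (real n * s ^ (n - 1)) * indicator {0..1} s))) {..<t}
         = ennreal (c * max 0 (min t 1) ^ n)"
proof (cases "0 < t")
  case False
  then show ?thesis
    using assms(2) by (simp add: emeasure_density nn_integral_cong[where v = "\<lambda>_. 0"] max_def min_def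
        zero_power split: split_indicator)
next
  case True
  define m where "m = min t 1"
  have "AE s in lborel. ennreal (c * (real n * s ^ (n - 1)) * indicator {0..1} s) * indicator {..<t} s
        = ennreal (c * (real n * s ^ (n - 1))) * indicator {0..m} s"
    using AE_lborel_singleton[of t] by eventually_elim (auto simp: m_def split: split_indicator)
  then have "emeasure (density lborel (\<lambda>s. ennreal (c * (real n * s ^ (n - 1)) * indicator {0..1} s))) {..<t}
        = (\<integral>\<^sup>+ s. ennreal (c * (real n * s ^ (n - 1))) * indicator {0..m} s \<partial>lborel)"
    by (simp add: emeasure_density nn_integral_cong_AE)
  also have "\<dots> = ennreal (c * m ^ n)"
    using True assms by (subst nn_integral_FTC_Icc[where F = "\<lambda>s. c * s ^ n"])
      (auto intro!: derivative_eq_intros simp: m_def zero_power)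
  finally show ?thesis
    using True by (simp add: m_def)
qed

lemma set_integrable_continuous_bounded:
  fixes f :: "'a::euclidean_space \<Rightarrow> real"
  assumes "continuous_on UNIV f" "bounded S" "S \<in> sets lebesgue"
  shows "set_integrable lebesgue S f"
proof -
  obtain b where "S \<subseteq> cbox (- b) b"
    using bounded_subset_cbox_symmetric[OF assms(2)] .
  moreover have "f absolutely_integrable_on cbox (- b) b"
    by (rule absolutely_integrable_continuous[OF continuous_on_subset[OF assms(1) subset_UNIV]])
  ultimately show ?thesis
    using assms(3) by (auto intro: set_integrable_subset)
qed

lemma measure_lebesgue_open_pos:
  assumes "open S" "bounded S" "S \<noteq> {}"
  shows "0 < measure lebesgue S"
proof -
  have "S \<in> lmeasurable"
    using assms(1,2) by (simp add: bounded_set_imp_lmeasurable)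
  then have "measure lebesgue S \<noteq> 0"
    using open_not_negligible[OF assms(1,3)] by (simp add: negligible_iff_measure)
  then show ?thesis
    using measure_nonneg[of lebesgue S] by linarith
qed

lemma distr_minkowski_gauge:
  fixes P :: "'a::euclidean_space set"
  assumes "open P" "convex P" "bounded P" "x0 \<in> P"
  defines "n \<equiv> DIM('a)"
  shows "distr (density lebesgue (\<lambda>x. ennreal (indicator P x))) borel (minkowski_gauge P x0)
       = density lborel (\<lambda>s. ennreal (measure lebesgue P * (real n * s ^ (n - 1)) * indicator {0..1} s))"
    (is "?L = ?R")
proof (rule measure_eqI_Iio)
  let ?g = "minkowski_gauge P x0"
  have g [measurable]: "?g \<in> borel_measurable lebesgue"
    using borel_measurable_minkowski_gauge[OF assms(1,2,4)] .
  have [measurable]: "P \<in> sets lebesgue"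
    using assms(1) by simp
  have L: "emeasure ?L {..<t} = emeasure lebesgue (P \<inter> {x. ?g x < t})" for t
  proof -
    have [measurable]: "{x. ?g x < t} \<in> sets lebesgue"
      using measurable_sets[OF g, of "{..<t}"] by (simp add: vimage_def)
    have "emeasure ?L {..<t}
          = (\<integral>\<^sup>+ x. ennreal (indicator P x) * indicator {x. ?g x < t} x \<partial>lebesgue)"
      by (simp add: emeasure_distr emeasure_density vimage_def)
    also have "\<dots> = (\<integral>\<^sup>+ x. indicator (P \<inter> {x. ?g x < t}) x \<partial>lebesgue)"
      by (intro nn_integral_cong) (simp split: split_indicator)
    also have "\<dots> = emeasure lebesgue (P \<inter> {x. ?g x < t})"
      by (intro nn_integral_indicator sets.Int) simp_all
    finally show ?thesis .
  qed
  show "emeasure ?L {..<t} < \<infinity>" for t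
    by (simp add: L emeasure_minkowski_gauge_less[OF assms(1-4)])
  have "1 \<le> n"
    by (simp add: n_def Suc_leI)
  show "emeasure ?L {..<t} = emeasure ?R {..<t}" for t
    using emeasure_density_power_lessThan[OF measure_nonneg \<open>1 \<le> n\<close>, of lebesgue P t]
    by (simp add: L emeasure_minkowski_gauge_less[OF assms(1-4)] n_def)
qed simp_all

lemma set_integral_minkowski_gauge:
  fixes P :: "'a::euclidean_space set" and h :: "real \<Rightarrow> real"
  assumes "open P" "convex P" "bounded P" "x0 \<in> P" and [measurable]: "h \<in> borel_measurable borel"
  defines "n \<equiv> DIM('a)"
  shows "(LINT x:P|lebesgue. h (minkowski_gauge P x0 x))
       = measure lebesgue P * (LINT s:{0..1}|lborel. real n * s ^ (n - 1) * h s)"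
proof -
  let ?g = "minkowski_gauge P x0" and ?c = "measure lebesgue P"
  let ?Q = "density lebesgue (\<lambda>x. ennreal (indicator P x))"
  have [measurable]: "?g \<in> borel_measurable lebesgue"
    using borel_measurable_minkowski_gauge[OF assms(1,2,4)] .
  have [measurable]: "P \<in> sets lebesgue"
    using assms(1) by simp
  have "(LINT x:P|lebesgue. h (?g x)) = integral\<^sup>L ?Q (\<lambda>x. h (?g x))"
    unfolding set_lebesgue_integral_def by (subst integral_density) auto
  also have "\<dots> = integral\<^sup>L (distr ?Q borel ?g) h"
    by (subst integral_distr) auto
  also have "\<dots> = (\<integral>s. (?c * (real n * s ^ (n - 1)) * indicator {0..1} s) *\<^sub>R h s \<partial>lborel)"
    unfolding distr_minkowski_gauge[OF assms(1-4)] n_def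
    by (subst integral_density) (auto split: split_indicator)
  also have "\<dots> = ?c * (LINT s:{0..1}|lborel. real n * s ^ (n - 1) * h s)"
    unfolding set_lebesgue_integral_def
    by (subst integral_mult_right_zero[symmetric]) (simp add: ac_simps)
  finally show ?thesis .
qed

lemma DERIV_power_Suc_minus_power:
  fixes s :: real
  assumes "1 \<le> n"
  shows "((\<lambda>s. s ^ (n + 1) - s ^ n) has_real_derivative
           real n * s ^ (n - 1) * ((real n + 1) / real n * s - 1)) (at s)"
proof -
  obtain m where n: "n = Suc m"
    using assms by (cases n) auto
  have "((\<lambda>s. s ^ (n + 1) - s ^ n) has_real_derivative
          real (n + 1) * s ^ (n + 1 - Suc 0) - real n * s ^ (n - Suc 0)) (at s)"
    by (intro DERIV_diff DERIV_pow)
  moreover have "real (n + 1) * s ^ (n + 1 - Suc 0) - real n * s ^ (n - Suc 0)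
                 = real n * s ^ (n - 1) * ((real n + 1) / real n * s - 1)"
    unfolding n by (simp add: field_simps)
  ultimately show ?thesis
    by simp
qed

lemma set_integral_extremal_profile:
  assumes "1 \<le> n"
  shows "(LINT s:{0..1}|lborel. real n * s ^ (n - 1) * ((real n + 1) / real n * s - 1)) = 0"
proof -
  have "(\<integral>s. real n * s ^ (n - 1) * ((real n + 1) / real n * s - 1) * indicator {0..1} s \<partial>lborel)
        = (1 ^ (n + 1) - 1 ^ n) - (0 ^ (n + 1) - 0 ^ n)"
    using assms by (intro integral_FTC_Icc_real DERIV_power_Suc_minus_power) (auto intro!: continuous_intros)
  then show ?thesis
    using assms by (simp add: set_lebesgue_integral_def mult.commute)
qed

lemma set_integral_abs_extremal_profile:
  assumes "1 \<le> n"
  shows "(LINT s:{0..1}|lborel. real n * s ^ (n - 1) * \<bar>(real n + 1) / real n * s - 1\<bar>)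
         = 2 / (real n + 1) * (real n / (real n + 1)) ^ n"
proof -
  define a where "a = (real n + 1) / real n"
  define s0 where "s0 = real n / (real n + 1)"
  define f where "f s = real n * s ^ (n - 1) * (a * s - 1)" for s
  define F where "F s = s ^ (n + 1) - s ^ n" for s :: real
  have "0 < a" "0 \<le> s0" "s0 \<le> 1" "a * s0 = 1"
    using assms by (auto simp: a_def s0_def)
  have F: "(F has_real_derivative f s) (at s)" for s
    unfolding F_def f_def a_def by (rule DERIV_power_Suc_minus_power[OF assms])
  have "has_bochner_integral lborel (\<lambda>s. - f s * indicator {0..s0} s) ((- F s0) - (- F 0))"
    using \<open>0 \<le> s0\<close> by (intro has_bochner_integral_FTC_Icc_real DERIV_minus F)
      (auto simp: f_def intro!: continuous_intros)
  moreover have "has_bochner_integral lborel (\<lambda>s. f s * indicator {s0..1} s) (F 1 - F s0)"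
    using \<open>s0 \<le> 1\<close> by (intro has_bochner_integral_FTC_Icc_real F)
      (auto simp: f_def intro!: continuous_intros)
  ultimately have "has_bochner_integral lborel
      (\<lambda>s. - f s * indicator {0..s0} s + f s * indicator {s0..1} s) ((- F s0 - - F 0) + (F 1 - F s0))"
    by (rule has_bochner_integral_add)
  moreover have "(- F s0 - - F 0) + (F 1 - F s0) = - 2 * F s0"
    using assms by (simp add: F_def)
  \<comment> \<open>\<open>f\<close> changes sign at \<open>s\<^sub>0\<close> and vanishes there, so the two pieces overlap harmlessly\<close>
  moreover have "- f s * indicator {0..s0} s + f s * indicator {s0..1} s
      = indicator {0..1} s *\<^sub>R (real n * s ^ (n - 1) * \<bar>a * s - 1\<bar>)" for s
  proof -
    have "a * s \<le> 1 \<longleftrightarrow> s \<le> s0"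
      using \<open>0 < a\<close> \<open>a * s0 = 1\<close> by (metis mult_le_cancel_left_pos)
    then show ?thesis
      using \<open>0 \<le> s0\<close> \<open>s0 \<le> 1\<close> \<open>a * s0 = 1\<close>
      by (cases "s = s0") (auto simp: f_def indicator_def abs_if algebra_simps)
  qed
  ultimately have "(LINT s:{0..1}|lborel. real n * s ^ (n - 1) * \<bar>a * s - 1\<bar>) = - 2 * F s0"
    by (simp add: set_lebesgue_integral_def has_bochner_integral_iff)
  also have "\<dots> = 2 * s0 ^ n * (1 - s0)"
    by (simp add: F_def algebra_simps)
  also have "\<dots> = 2 / (real n + 1) * (real n / (real n + 1)) ^ n"
    by (simp add: s0_def field_simps)
  finally show ?thesis
    by (simp add: a_def)
qed

theorem theorem1p2:
  fixes P :: "(real ^ 'n) set"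
  assumes "open P" and "bounded P" and "convex P" and "P \<noteq> {}"
  shows "\<exists>\<phi> :: real ^ 'n \<Rightarrow> real.
           convex_on P \<phi> \<and>
           set_integrable lebesgue P \<phi> \<and>
           (LINT x:P|lebesgue. \<phi> x) = 0 \<and>
           (INF x\<in>P. \<phi> x) = -1 \<and>
           - (2 / (real CARD('n) + 1)) * (real CARD('n) / (real CARD('n) + 1)) ^ CARD('n)
               * (INF x\<in>P. \<phi> x)
             = (1 / measure lebesgue P) * (LINT x:P|lebesgue. \<bar>\<phi> x\<bar>)"
proof -
  obtain x0 where "x0 \<in> P"
    using assms(4) by blast
  note P = assms(1,3,2) \<open>x0 \<in> P\<close>
  define n where "n = CARD('n)"
  define a where "a = (real n + 1) / real n"
  define \<phi> where "\<phi> = (\<lambda>x. a * minkowski_gauge P x0 x - 1)"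
  have "1 \<le> n" "0 \<le> a"
    by (simp_all add: n_def a_def Suc_leI)
  have "convex_on P \<phi>" "(INF x\<in>P. \<phi> x) = -1"
    unfolding \<phi>_def using \<open>0 \<le> a\<close>
    by (simp_all add: convex_on_affine_minkowski_gauge[OF P(1,2,4)] INF_affine_minkowski_gauge[OF P(1,2,4)])
  moreover have "continuous_on UNIV \<phi>"
    unfolding \<phi>_def using continuous_on_minkowski_gauge[OF P(1,2,4)]
    by (intro continuous_on_diff continuous_on_mult_left continuous_on_const)
  then have "set_integrable lebesgue P \<phi>"
    using assms(1,2) by (simp add: set_integrable_continuous_bounded)
  moreover have "(LINT x:P|lebesgue. \<phi> x) = 0"
    using set_integral_minkowski_gauge[OF P, of "\<lambda>s. a * s - 1"]
      set_integral_extremal_profile[OF \<open>1 \<le> n\<close>]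
    by (simp add: \<phi>_def a_def n_def)
  moreover have "(LINT x:P|lebesgue. \<bar>\<phi> x\<bar>)
                 = measure lebesgue P * (2 / (real n + 1) * (real n / (real n + 1)) ^ n)"
    using set_integral_minkowski_gauge[OF P, of "\<lambda>s. \<bar>a * s - 1\<bar>"]
      set_integral_abs_extremal_profile[OF \<open>1 \<le> n\<close>]
    by (simp add: \<phi>_def a_def n_def)
  ultimately show ?thesis
    using measure_lebesgue_open_pos[OF assms(1,2,4)] by (intro exI[of _ \<phi>]) (simp add: n_def)
qed

end
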